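(* Let $P,Q\in W^{(l)}\setminus\{0\}$. Then: (1) $w(PQ)=w(P)+w(Q)$ and $\overline w(PQ)=\overline w(P)+\overline w(Q)$; in particular $PQ\neq0$. (2) $\ell_{\rho,\sigma}(PQ)=\ell_{\rho,\sigma}(P)\ell_{\rho,\sigma}(Q)$ for all $(\rho,\sigma)\in\mathfrak V$. (3) $v_{\rho,\sigma}(PQ)=v_{\rho,\sigma}(P)+v_{\rho,\sigma}(Q)$ for all $(\rho,\sigma)\in\overline{\mathfrak V}$. (4) $\mathrm{st}_{\rho,\sigma}(PQ)=\mathrm{st}_{\rho,\sigma}(P)+\mathrm{st}_{\rho,\sigma}(Q)$ for all $(\rho,\sigma)\in\mathfrak V$. (5) $\mathrm{en}_{\rho,\sigma}(PQ)=\mathrm{en}_{\rho,\sigma}(P)+\mathrm{en}_{\rho,\sigma}(Q)$ for all $(\rho,\sigma)\in\mathfrak V$. The same properties hold for $P,Q\in L^{(l)}\setminus\{0\}$.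
   Context: $K$ is a field of characteristic zero, $l\in\mathbb{N}$. $W^{(l)}$ is the associative $K$-algebra with $K$-basis $\{X^{i/l}Y^j:i\in\mathbb{Z},j\in\mathbb{N}_0\}$, powers of $X$ multiplying as Laurent monomials and $[Y,X^\alpha]=\alpha X^{\alpha-1}$ for $\alpha\in\frac1l\mathbb{Z}$. $L^{(l)}=K[x^{1/l},x^{-1/l},y]$ (commutative), $\Psi^{(l)}(X^{i/l}Y^j)=x^{i/l}y^j$ ($K$-linear). Supports are sets of exponents with nonzero coefficients (for $W^{(l)}$, via $\Psi^{(l)}$). $\overline{\mathfrak V}=\{(\rho,\sigma)\in\mathbb{Z}^2:\gcd(\rho,\sigma)=1,\rho+\sigma\ge0\}$, $\mathfrak V$ its subset with $\rho+\sigma>0$. For $P\ne0$, $v_{\rho,\sigma}(P)=\max\{\rho a+\sigma b:(a,b)\in\mathrm{Supp}(P)\}$ and $\ell_{\rho,\sigma}(P)$ is the sum of the terms (of $\Psi^{(l)}(P)$) whose exponent attains this maximum. $w(P)$: among the points $(a,b)\in\mathrm{Supp}(P)$ maximizing $a-b$, the one with largest $a$; $\overline w(P)$: among those maximizing $b-a$, the one with largest $b$. $\mathrm{st}_{\rho,\sigma}(P):=w(\ell_{\rho,\sigma}(P))$, $\mathrm{en}_{\rho,\sigma}(P):=\overline w(\ell_{\rho,\sigma}(P))$. *)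

theory Defs
  imports Complex_Main "HOL-Library.Product_Plus"
begin

text \<open>Elements of W^(l) and of L^(l) are represented by their coefficient functions
  on encoded exponents (i, j) :: int \<times> nat, standing for X^(i/l) Y^j (resp. x^(i/l) y^j),
  with finite support.\<close>

definition supp :: "(int \<times> nat \<Rightarrow> 'a::zero) \<Rightarrow> (int \<times> nat) set" where
  "supp P = {e. P e \<noteq> 0}"

definition dec :: "nat \<Rightarrow> int \<times> nat \<Rightarrow> rat \<times> rat" where
  "dec l e = (of_int (fst e) / of_nat l, of_nat (snd e))"

text \<open>Product in W^(l):  (X^(a/l) Y^j)(X^(b/l) Y^k) =
  \<Sum>_{m\<le>j} (j choose m) (b/l)(b/l-1)...(b/l-m+1) X^((a+b)/l - m) Y^(j+k-m),
  which follows from [Y, X^\<alpha>] = \<alpha> X^(\<alpha>-1).\<close>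
definition Wmult :: "nat \<Rightarrow> (int \<times> nat \<Rightarrow> 'a::field_char_0) \<Rightarrow> (int \<times> nat \<Rightarrow> 'a) \<Rightarrow> (int \<times> nat \<Rightarrow> 'a)" where
  "Wmult l P Q = (\<lambda>e. \<Sum>x\<in>supp P. \<Sum>y\<in>supp Q. \<Sum>m\<in>{..snd x}.
     if e = (fst x + fst y - int m * int l, snd x + snd y - m)
     then of_nat (snd x choose m) * (\<Prod>t<m. of_int (fst y) / of_nat l - of_nat t) * P x * Q y
     else 0)"

definition Lmult :: "(int \<times> nat \<Rightarrow> 'a::field_char_0) \<Rightarrow> (int \<times> nat \<Rightarrow> 'a) \<Rightarrow> (int \<times> nat \<Rightarrow> 'a)" where
  "Lmult P Q = (\<lambda>e. \<Sum>x\<in>supp P. \<Sum>y\<in>supp Q. if e = x + y then P x * Q y else 0)"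

definition Vbar :: "(int \<times> int) set" where
  "Vbar = {(\<rho>, \<sigma>). coprime \<rho> \<sigma> \<and> \<rho> + \<sigma> \<ge> 0}"

definition V :: "(int \<times> int) set" where
  "V = {(\<rho>, \<sigma>). coprime \<rho> \<sigma> \<and> \<rho> + \<sigma> > 0}"

definition vval :: "nat \<Rightarrow> int \<Rightarrow> int \<Rightarrow> (int \<times> nat \<Rightarrow> 'a::zero) \<Rightarrow> rat" where
  "vval l \<rho> \<sigma> P = Max ((\<lambda>e. of_int \<rho> * fst (dec l e) + of_int \<sigma> * snd (dec l e)) ` supp P)"

definition lead :: "nat \<Rightarrow> int \<Rightarrow> int \<Rightarrow> (int \<times> nat \<Rightarrow> 'a::zero) \<Rightarrow> (int \<times> nat \<Rightarrow> 'a)" where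
  "lead l \<rho> \<sigma> P = (\<lambda>e. if of_int \<rho> * fst (dec l e) + of_int \<sigma> * snd (dec l e) = vval l \<rho> \<sigma> P
                        then P e else 0)"

definition wpt :: "nat \<Rightarrow> (int \<times> nat \<Rightarrow> 'a::zero) \<Rightarrow> rat \<times> rat" where
  "wpt l P = (THE p. p \<in> dec l ` supp P
      \<and> (\<forall>q \<in> dec l ` supp P. fst q - snd q \<le> fst p - snd p)
      \<and> (\<forall>q \<in> dec l ` supp P. fst q - snd q = fst p - snd p \<longrightarrow> fst q \<le> fst p))"

definition wbar :: "nat \<Rightarrow> (int \<times> nat \<Rightarrow> 'a::zero) \<Rightarrow> rat \<times> rat" where
  "wbar l P = (THE p. p \<in> dec l ` supp P
      \<and> (\<forall>q \<in> dec l ` supp P. snd q - fst q \<le> snd p - fst p)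
      \<and> (\<forall>q \<in> dec l ` supp P. snd q - fst q = snd p - fst p \<longrightarrow> snd q \<le> snd p))"

definition st :: "nat \<Rightarrow> int \<Rightarrow> int \<Rightarrow> (int \<times> nat \<Rightarrow> 'a::zero) \<Rightarrow> rat \<times> rat" where
  "st l \<rho> \<sigma> P = wpt l (lead l \<rho> \<sigma> P)"

definition en :: "nat \<Rightarrow> int \<Rightarrow> int \<Rightarrow> (int \<times> nat \<Rightarrow> 'a::zero) \<Rightarrow> rat \<times> rat" where
  "en l \<rho> \<sigma> P = wbar l (lead l \<rho> \<sigma> P)"

end

theory Submission
  imports Defs "HOL-Library.Product_Lexorder"
begin

text \<open>Both products are deformations of the commutative one: the monomials at exponents x and y
  contribute at x + y with coefficient one, and in W further at x + y - (m, m) for m \<ge> 1.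
  For \<rho> + \<sigma> \<ge> 0 order exponents lexicographically by (v, a, b), v being the (\<rho>, \<sigma>)-weight.
  This order is total, compatible with addition, and puts every correction term strictly below
  x + y, so the maximal monomial of PQ is the product of the maximal monomials of P and Q and
  cannot cancel. For (\<rho>, \<sigma>) = (1, -1) resp. (-1, 1) the maximum is w resp. wbar, and its first
  component is v. If \<rho> + \<sigma> > 0 the correction terms even have strictly smaller v, so the
  leading forms multiply as in L, and st, en follow by applying w, wbar to the leading forms.\<close>

instance prod :: (linordered_ab_group_add, linordered_ab_group_add) linordered_ab_group_add
  by standard (auto simp: less_eq_prod_def)

lemma sum_delta_triple:
  fixes A :: "'a::comm_monoid_add"
  assumes "finite B" "M \<in> B" "finite C" "N \<in> C" "finite (S M)" "0 \<in> S M"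
  shows "(\<Sum>x\<in>B. \<Sum>y\<in>C. \<Sum>m\<in>S x. if x = M \<and> y = N \<and> m = 0 then A else 0) = A"
proof -
  have "(\<Sum>m\<in>S x. if x = M \<and> y = N \<and> m = 0 then A else 0) = (if x = M \<and> y = N then A else 0)"
    for x y
    using assms(5,6) by (cases "x = M \<and> y = N") auto
  moreover have "(\<Sum>y\<in>C. if x = M \<and> y = N then A else 0) = (if x = M then A else 0)" for x
    using assms(3,4) by (cases "x = M") auto
  ultimately show ?thesis
    using assms(1,2) by simp
qed

lemma dec_add: "dec l (x + y) = dec l x + dec l y"
  by (cases x; cases y) (simp add: dec_def add_divide_distrib)

lemma dec_inject: "l > 0 \<Longrightarrow> dec l x = dec l y \<longleftrightarrow> x = y"
  by (cases x; cases y) (auto simp: dec_def)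

definition weight :: "nat \<Rightarrow> int \<Rightarrow> int \<Rightarrow> int \<times> nat \<Rightarrow> rat" where
  "weight l \<rho> \<sigma> e = of_int \<rho> * fst (dec l e) + of_int \<sigma> * snd (dec l e)"

definition weight_key :: "nat \<Rightarrow> int \<Rightarrow> int \<Rightarrow> int \<times> nat \<Rightarrow> rat \<times> rat \<times> rat" where
  "weight_key l \<rho> \<sigma> e = (weight l \<rho> \<sigma> e, dec l e)"

definition top_exponent :: "nat \<Rightarrow> int \<Rightarrow> int \<Rightarrow> (int \<times> nat \<Rightarrow> 'a::zero) \<Rightarrow> int \<times> nat \<Rightarrow> bool" where
  "top_exponent l \<rho> \<sigma> P M \<longleftrightarrow>
     M \<in> supp P \<and> (\<forall>x\<in>supp P. weight_key l \<rho> \<sigma> x \<le> weight_key l \<rho> \<sigma> M)"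

lemma weight_add: "weight l \<rho> \<sigma> (x + y) = weight l \<rho> \<sigma> x + weight l \<rho> \<sigma> y"
  by (simp add: weight_def dec_add algebra_simps)

lemma weight_key_add: "weight_key l \<rho> \<sigma> (x + y) = weight_key l \<rho> \<sigma> x + weight_key l \<rho> \<sigma> y"
  by (simp add: weight_key_def weight_add dec_add)

lemma weight_key_inject: "l > 0 \<Longrightarrow> weight_key l \<rho> \<sigma> x = weight_key l \<rho> \<sigma> y \<longleftrightarrow> x = y"
  by (auto simp: weight_key_def dec_inject)

lemma weight_mono_weight_key:
  "weight_key l \<rho> \<sigma> x \<le> weight_key l \<rho> \<sigma> y \<Longrightarrow> weight l \<rho> \<sigma> x \<le> weight l \<rho> \<sigma> y"
  by (auto simp: weight_key_def)

lemma ex_top_exponent: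
  assumes "finite (supp P)" "P \<noteq> (\<lambda>_. 0)"
  obtains M where "top_exponent l \<rho> \<sigma> P M"
proof -
  let ?K = "weight_key l \<rho> \<sigma> ` supp P"
  have "supp P \<noteq> {}"
    using assms(2) by (auto simp: supp_def)
  then have "Max ?K \<in> ?K"
    using assms(1) by (intro Max_in) auto
  then obtain M where "M \<in> supp P" "weight_key l \<rho> \<sigma> M = Max ?K"
    by auto
  then show ?thesis
    using assms(1) by (intro that) (auto simp: top_exponent_def)
qed

lemma vval_eq_Max_weight: "vval l \<rho> \<sigma> P = Max (weight l \<rho> \<sigma> ` supp P)"
  by (simp add: vval_def weight_def)

lemma weight_le_vval: "finite (supp P) \<Longrightarrow> x \<in> supp P \<Longrightarrow> weight l \<rho> \<sigma> x \<le> vval l \<rho> \<sigma> P"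
  by (simp add: vval_eq_Max_weight)

lemma vval_eq_weight_top:
  assumes "finite (supp P)" "top_exponent l \<rho> \<sigma> P M"
  shows "vval l \<rho> \<sigma> P = weight l \<rho> \<sigma> M"
  using assms unfolding vval_eq_Max_weight top_exponent_def
  by (intro Max_eqI) (auto intro: weight_mono_weight_key)

lemma lead_eq: "lead l \<rho> \<sigma> P e = (if weight l \<rho> \<sigma> e = vval l \<rho> \<sigma> P then P e else 0)"
  by (simp add: lead_def weight_def)

lemma supp_lead_subset: "supp (lead l \<rho> \<sigma> P) \<subseteq> supp P"
  by (auto simp: supp_def lead_eq)

lemma lead_nonzero:
  assumes "finite (supp P)" "P \<noteq> (\<lambda>_. 0)"
  shows "lead l \<rho> \<sigma> P \<noteq> (\<lambda>_. 0)"
proof -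
  obtain M where M: "top_exponent l \<rho> \<sigma> P M"
    using ex_top_exponent assms .
  then have "lead l \<rho> \<sigma> P M = P M"
    using vval_eq_weight_top[OF assms(1)] by (simp add: lead_eq)
  then show ?thesis
    using M by (auto simp: top_exponent_def supp_def)
qed

lemma wpt_eq_dec_top:
  assumes "top_exponent l 1 (-1) P M"
  shows "wpt l P = dec l M"
  unfolding wpt_def
proof (rule the_equality)
  let ?M = "dec l M"
  have dominated: "fst q - snd q < fst ?M - snd ?M
      \<or> fst q - snd q = fst ?M - snd ?M \<and> fst q \<le> fst ?M" if "q \<in> dec l ` supp P" for q
    using that assms by (auto simp: top_exponent_def weight_key_def weight_def less_eq_prod_def)
  show "?M \<in> dec l ` supp P
      \<and> (\<forall>q\<in>dec l ` supp P. fst q - snd q \<le> fst ?M - snd ?M)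
      \<and> (\<forall>q\<in>dec l ` supp P. fst q - snd q = fst ?M - snd ?M \<longrightarrow> fst q \<le> fst ?M)"
    using assms dominated by (fastforce simp: top_exponent_def)
  fix p
  assume "p \<in> dec l ` supp P
      \<and> (\<forall>q\<in>dec l ` supp P. fst q - snd q \<le> fst p - snd p)
      \<and> (\<forall>q\<in>dec l ` supp P. fst q - snd q = fst p - snd p \<longrightarrow> fst q \<le> fst p)"
  then show "p = ?M"
    using dominated[of p] assms by (force simp: top_exponent_def prod_eq_iff)
qed

lemma wbar_eq_dec_top:
  assumes "top_exponent l (-1) 1 P M"
  shows "wbar l P = dec l M"
  unfolding wbar_def
proof (rule the_equality)
  let ?M = "dec l M"
  have dominated: "snd q - fst q < snd ?M - fst ?M
      \<or> snd q - fst q = snd ?M - fst ?M \<and> snd q \<le> snd ?M" if "q \<in> dec l ` supp P" for q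
    using that assms by (auto simp: top_exponent_def weight_key_def weight_def less_eq_prod_def)
  show "?M \<in> dec l ` supp P
      \<and> (\<forall>q\<in>dec l ` supp P. snd q - fst q \<le> snd ?M - fst ?M)
      \<and> (\<forall>q\<in>dec l ` supp P. snd q - fst q = snd ?M - fst ?M \<longrightarrow> snd q \<le> snd ?M)"
    using assms dominated by (fastforce simp: top_exponent_def)
  fix p
  assume "p \<in> dec l ` supp P
      \<and> (\<forall>q\<in>dec l ` supp P. snd q - fst q \<le> snd p - fst p)
      \<and> (\<forall>q\<in>dec l ` supp P. snd q - fst q = snd p - fst p \<longrightarrow> snd q \<le> snd p)"
  then show "p = ?M"
    using dominated[of p] assms by (force simp: top_exponent_def prod_eq_iff)
qed

lemma Lmult_eq_sum_supersets:
  assumes "finite A" "finite B" "supp P \<subseteq> A" "supp Q \<subseteq> B"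
  shows "Lmult P Q e = (\<Sum>x\<in>A. \<Sum>y\<in>B. if e = x + y then P x * Q y else 0)"
proof -
  have "Lmult P Q e = (\<Sum>x\<in>supp P. \<Sum>y\<in>B. if e = x + y then P x * Q y else 0)"
    unfolding Lmult_def using assms(2,4)
    by (intro sum.cong refl sum.mono_neutral_left) (auto simp: supp_def)
  also have "\<dots> = (\<Sum>x\<in>A. \<Sum>y\<in>B. if e = x + y then P x * Q y else 0)"
    using assms(1,3) by (intro sum.mono_neutral_left) (auto simp: supp_def intro!: sum.neutral split: if_splits)
  finally show ?thesis .
qed

definition deformed_mult ::
  "(int \<times> nat \<Rightarrow> nat set) \<Rightarrow> (int \<times> nat \<Rightarrow> int \<times> nat \<Rightarrow> nat \<Rightarrow> int \<times> nat)
    \<Rightarrow> (int \<times> nat \<Rightarrow> int \<times> nat \<Rightarrow> nat \<Rightarrow> 'a::field_char_0)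
    \<Rightarrow> (int \<times> nat \<Rightarrow> 'a) \<Rightarrow> (int \<times> nat \<Rightarrow> 'a) \<Rightarrow> int \<times> nat \<Rightarrow> 'a" where
  "deformed_mult S T c P Q = (\<lambda>e. \<Sum>x\<in>supp P. \<Sum>y\<in>supp Q. \<Sum>m\<in>S x.
     if e = T x y m then c x y m * P x * Q y else 0)"

locale deformed_product =
  fixes l :: nat
    and S :: "int \<times> nat \<Rightarrow> nat set"
    and T :: "int \<times> nat \<Rightarrow> int \<times> nat \<Rightarrow> nat \<Rightarrow> int \<times> nat"
    and c :: "int \<times> nat \<Rightarrow> int \<times> nat \<Rightarrow> nat \<Rightarrow> 'a::field_char_0"
  assumes l_pos: "l > 0"
    and finite_S: "finite (S x)"
    and zero_in_S: "0 \<in> S x"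
    and T_zero: "T x y 0 = x + y"
    and c_zero: "c x y 0 = 1"
    and dec_T: "m \<in> S x \<Longrightarrow> m \<noteq> 0 \<Longrightarrow> dec l (T x y m) = dec l x + dec l y - (of_nat m, of_nat m)"
begin

abbreviation mult :: "(int \<times> nat \<Rightarrow> 'a) \<Rightarrow> (int \<times> nat \<Rightarrow> 'a) \<Rightarrow> int \<times> nat \<Rightarrow> 'a" where
  "mult \<equiv> deformed_mult S T c"

lemma weight_T:
  assumes "m \<in> S x" "m \<noteq> 0"
  shows "weight l \<rho> \<sigma> (T x y m) = weight l \<rho> \<sigma> x + weight l \<rho> \<sigma> y - of_int (\<rho> + \<sigma>) * of_nat m"
proof -
  have fst_T: "fst (dec l (T x y m)) = fst (dec l x) + fst (dec l y) - of_nat m"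
    and snd_T: "snd (dec l (T x y m)) = snd (dec l x) + snd (dec l y) - of_nat m"
    using dec_T[OF assms, of y] by simp_all
  show ?thesis
    unfolding weight_def fst_T snd_T by (simp add: algebra_simps)
qed

lemma weight_T_less:
  assumes "\<rho> + \<sigma> > 0" "m \<in> S x" "m \<noteq> 0"
  shows "weight l \<rho> \<sigma> (T x y m) < weight l \<rho> \<sigma> x + weight l \<rho> \<sigma> y"
  using assms by (simp add: weight_T)

lemma weight_key_T_less:
  assumes "\<rho> + \<sigma> \<ge> 0" "m \<in> S x" "m \<noteq> 0"
  shows "weight_key l \<rho> \<sigma> (T x y m) < weight_key l \<rho> \<sigma> x + weight_key l \<rho> \<sigma> y"
  using assms weight_T[OF assms(2,3), of \<rho> \<sigma> y] dec_T[OF assms(2,3), of y]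
  by (auto simp: weight_key_def less_prod_def' mult_nonneg_nonneg)

lemma finite_supp_mult:
  assumes "finite (supp P)" "finite (supp Q)"
  shows "finite (supp (mult P Q))"
proof (rule finite_subset)
  show "finite (\<Union>x\<in>supp P. \<Union>y\<in>supp Q. T x y ` S x)"
    using assms finite_S by auto
  show "supp (mult P Q) \<subseteq> (\<Union>x\<in>supp P. \<Union>y\<in>supp Q. T x y ` S x)"
    by (force simp: supp_def deformed_mult_def intro!: sum.neutral)
qed

lemma mult_term_above_top:
  assumes "\<rho> + \<sigma> \<ge> 0" "top_exponent l \<rho> \<sigma> P M" "top_exponent l \<rho> \<sigma> Q N"
    and "x \<in> supp P" "y \<in> supp Q" "m \<in> S x"
    and above: "weight_key l \<rho> \<sigma> (M + N) \<le> weight_key l \<rho> \<sigma> (T x y m)"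
  shows "x = M \<and> y = N \<and> m = 0"
proof -
  let ?k = "weight_key l \<rho> \<sigma>"
  have kx: "?k x \<le> ?k M" and ky: "?k y \<le> ?k N"
    using assms(2-5) by (auto simp: top_exponent_def)
  have m: "m = 0"
  proof (rule ccontr)
    assume "m \<noteq> 0"
    then have "?k (T x y m) < ?k x + ?k y"
      by (rule weight_key_T_less[OF assms(1,6)])
    also have "\<dots> \<le> ?k (M + N)"
      using kx ky by (simp add: weight_key_add add_mono)
    finally show False
      using above by simp
  qed
  then have "?k M + ?k N \<le> ?k x + ?k y"
    using above by (simp add: T_zero weight_key_add)
  then have "?k x = ?k M \<and> ?k y = ?k N"
    using kx ky add_less_le_mono[of "?k x" "?k M" "?k y" "?k N"]
      add_le_less_mono[of "?k x" "?k M" "?k y" "?k N"] by (auto simp: order_le_less)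
  with m show ?thesis
    by (simp add: weight_key_inject[OF l_pos])
qed

lemma mult_above_top:
  assumes "\<rho> + \<sigma> \<ge> 0" "finite (supp P)" "finite (supp Q)"
    and "top_exponent l \<rho> \<sigma> P M" "top_exponent l \<rho> \<sigma> Q N"
    and "weight_key l \<rho> \<sigma> (M + N) \<le> weight_key l \<rho> \<sigma> e"
  shows "mult P Q e = (if e = M + N then P M * Q N else 0)"
proof -
  have "mult P Q e = (\<Sum>x\<in>supp P. \<Sum>y\<in>supp Q. \<Sum>m\<in>S x.
      if x = M \<and> y = N \<and> m = 0 then (if e = M + N then P M * Q N else 0) else 0)"
    unfolding deformed_mult_def
  proof (intro sum.cong refl)
    fix x y m
    assume "x \<in> supp P" "y \<in> supp Q" "m \<in> S x"
    note term_at_top = mult_term_above_top[OF assms(1,4,5) this]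
    show "(if e = T x y m then c x y m * P x * Q y else 0)
        = (if x = M \<and> y = N \<and> m = 0 then (if e = M + N then P M * Q N else 0) else 0)"
      using term_at_top assms(6) by (cases "e = T x y m") (auto simp: T_zero c_zero)
  qed
  also have "\<dots> = (if e = M + N then P M * Q N else 0)"
    using assms(2-5) by (intro sum_delta_triple) (auto simp: top_exponent_def finite_S zero_in_S)
  finally show ?thesis .
qed

lemma top_exponent_mult:
  assumes "\<rho> + \<sigma> \<ge> 0" "finite (supp P)" "finite (supp Q)"
    and "top_exponent l \<rho> \<sigma> P M" "top_exponent l \<rho> \<sigma> Q N"
  shows "top_exponent l \<rho> \<sigma> (mult P Q) (M + N)"
proof -
  note at_top = mult_above_top[OF assms]
  have "mult P Q (M + N) = P M * Q N"
    using at_top by simp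
  then have "M + N \<in> supp (mult P Q)"
    using assms(4,5) by (simp add: top_exponent_def supp_def)
  moreover have "weight_key l \<rho> \<sigma> e \<le> weight_key l \<rho> \<sigma> (M + N)" if "e \<in> supp (mult P Q)" for e
  proof (rule ccontr)
    assume "\<not> ?thesis"
    then have "mult P Q e = 0"
      using at_top[of e] by auto
    with that show False
      by (simp add: supp_def)
  qed
  ultimately show ?thesis
    by (simp add: top_exponent_def)
qed

lemma mult_nonzero:
  assumes "finite (supp P)" "finite (supp Q)" "P \<noteq> (\<lambda>_. 0)" "Q \<noteq> (\<lambda>_. 0)"
  shows "mult P Q \<noteq> (\<lambda>_. 0)"
proof -
  obtain M N where "top_exponent l 0 0 P M" "top_exponent l 0 0 Q N"
    using ex_top_exponent assms by metis
  then have "M + N \<in> supp (mult P Q)"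
    using top_exponent_mult[of 0 0] assms(1,2) by (simp add: top_exponent_def)
  then show ?thesis
    by (auto simp: supp_def)
qed

lemma vval_mult:
  assumes "\<rho> + \<sigma> \<ge> 0" "finite (supp P)" "finite (supp Q)" "P \<noteq> (\<lambda>_. 0)" "Q \<noteq> (\<lambda>_. 0)"
  shows "vval l \<rho> \<sigma> (mult P Q) = vval l \<rho> \<sigma> P + vval l \<rho> \<sigma> Q"
proof -
  obtain M N where M: "top_exponent l \<rho> \<sigma> P M" and N: "top_exponent l \<rho> \<sigma> Q N"
    using ex_top_exponent assms(2-5) by metis
  have "vval l \<rho> \<sigma> (mult P Q) = weight l \<rho> \<sigma> (M + N)"
    using assms(1-3) M N by (intro vval_eq_weight_top finite_supp_mult top_exponent_mult)
  also have "\<dots> = vval l \<rho> \<sigma> P + vval l \<rho> \<sigma> Q"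
    using assms(2,3) M N by (simp add: weight_add vval_eq_weight_top)
  finally show ?thesis .
qed

lemma wpt_mult:
  assumes "finite (supp P)" "finite (supp Q)" "P \<noteq> (\<lambda>_. 0)" "Q \<noteq> (\<lambda>_. 0)"
  shows "wpt l (mult P Q) = wpt l P + wpt l Q"
proof -
  obtain M N where M: "top_exponent l 1 (-1) P M" and N: "top_exponent l 1 (-1) Q N"
    using ex_top_exponent assms by metis
  have "top_exponent l 1 (-1) (mult P Q) (M + N)"
    using assms(1,2) M N by (intro top_exponent_mult) simp_all
  with M N show ?thesis
    by (simp add: wpt_eq_dec_top dec_add)
qed

lemma wbar_mult:
  assumes "finite (supp P)" "finite (supp Q)" "P \<noteq> (\<lambda>_. 0)" "Q \<noteq> (\<lambda>_. 0)"
  shows "wbar l (mult P Q) = wbar l P + wbar l Q"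
proof -
  obtain M N where M: "top_exponent l (-1) 1 P M" and N: "top_exponent l (-1) 1 Q N"
    using ex_top_exponent assms by metis
  have "top_exponent l (-1) 1 (mult P Q) (M + N)"
    using assms(1,2) M N by (intro top_exponent_mult) simp_all
  with M N show ?thesis
    by (simp add: wbar_eq_dec_top dec_add)
qed

lemma mult_at_top_weight:
  assumes "\<rho> + \<sigma> > 0" "finite (supp P)" "finite (supp Q)"
    and top: "weight l \<rho> \<sigma> e = vval l \<rho> \<sigma> P + vval l \<rho> \<sigma> Q"
  shows "mult P Q e = Lmult (lead l \<rho> \<sigma> P) (lead l \<rho> \<sigma> Q) e"
proof -
  let ?w = "weight l \<rho> \<sigma>"
  have "mult P Q e
      = (\<Sum>x\<in>supp P. \<Sum>y\<in>supp Q. if e = x + y then lead l \<rho> \<sigma> P x * lead l \<rho> \<sigma> Q y else 0)"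
    unfolding deformed_mult_def
  proof (intro sum.cong refl)
    fix x y
    assume x: "x \<in> supp P" and y: "y \<in> supp Q"
    have wx: "?w x \<le> vval l \<rho> \<sigma> P" and wy: "?w y \<le> vval l \<rho> \<sigma> Q"
      using x y assms(2,3) by (simp_all add: weight_le_vval)
    let ?F = "\<lambda>m. if e = T x y m then c x y m * P x * Q y else 0"
    have "e \<noteq> T x y m" if "m \<in> S x" "m \<noteq> 0" for m
      using weight_T_less[OF assms(1) that, of y] wx wy top by auto
    then have "(\<Sum>m\<in>S x - {0}. ?F m) = 0"
      by (intro sum.neutral) auto
    then have "(\<Sum>m\<in>S x. ?F m) = ?F 0"
      by (simp add: sum.remove[OF finite_S zero_in_S])
    also have "\<dots> = (if e = x + y then P x * Q y else 0)"
      by (simp add: T_zero c_zero)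
    also have "\<dots> = (if e = x + y then lead l \<rho> \<sigma> P x * lead l \<rho> \<sigma> Q y else 0)"
      using wx wy top by (auto simp: lead_eq weight_add)
    finally show "(\<Sum>m\<in>S x. if e = T x y m then c x y m * P x * Q y else 0)
        = (if e = x + y then lead l \<rho> \<sigma> P x * lead l \<rho> \<sigma> Q y else 0)" .
  qed
  also have "\<dots> = Lmult (lead l \<rho> \<sigma> P) (lead l \<rho> \<sigma> Q) e"
    using assms(2,3) supp_lead_subset by (intro Lmult_eq_sum_supersets[symmetric])
  finally show ?thesis .
qed

lemma lead_mult:
  assumes "\<rho> + \<sigma> > 0" "finite (supp P)" "finite (supp Q)" "P \<noteq> (\<lambda>_. 0)" "Q \<noteq> (\<lambda>_. 0)"
  shows "lead l \<rho> \<sigma> (mult P Q) = Lmult (lead l \<rho> \<sigma> P) (lead l \<rho> \<sigma> Q)"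
proof
  fix e
  have v: "vval l \<rho> \<sigma> (mult P Q) = vval l \<rho> \<sigma> P + vval l \<rho> \<sigma> Q"
    using assms by (intro vval_mult) simp_all
  show "lead l \<rho> \<sigma> (mult P Q) e = Lmult (lead l \<rho> \<sigma> P) (lead l \<rho> \<sigma> Q) e"
  proof (cases "weight l \<rho> \<sigma> e = vval l \<rho> \<sigma> P + vval l \<rho> \<sigma> Q")
    case True
    then show ?thesis
      using mult_at_top_weight[OF assms(1-3)] v by (simp add: lead_eq)
  next
    case False
    have "Lmult (lead l \<rho> \<sigma> P) (lead l \<rho> \<sigma> Q) e = 0"
      unfolding Lmult_def
    proof (intro sum.neutral ballI)
      fix x y
      assume "x \<in> supp (lead l \<rho> \<sigma> P)" "y \<in> supp (lead l \<rho> \<sigma> Q)"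
      then have "weight l \<rho> \<sigma> x = vval l \<rho> \<sigma> P" "weight l \<rho> \<sigma> y = vval l \<rho> \<sigma> Q"
        by (auto simp: supp_def lead_eq split: if_splits)
      with False have "e \<noteq> x + y"
        by (auto simp: weight_add)
      then show "(if e = x + y then lead l \<rho> \<sigma> P x * lead l \<rho> \<sigma> Q y else 0) = 0"
        by simp
    qed
    with False v show ?thesis
      by (simp add: lead_eq)
  qed
qed

end

lemma deformed_product_Lmult:
  "l > 0 \<Longrightarrow> deformed_product l (\<lambda>_. {0}) (\<lambda>x y m. x + y) (\<lambda>_ _ _. 1 :: 'a::field_char_0)"
  by unfold_locales auto

lemma Lmult_eq_deformed_mult: "Lmult = deformed_mult (\<lambda>_. {0}) (\<lambda>x y m. x + y) (\<lambda>_ _ _. 1)"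
  unfolding Lmult_def deformed_mult_def by (simp only: mult_1_left) simp

lemma Wmult_eq_deformed_mult:
  "Wmult l = deformed_mult (\<lambda>x. {..snd x})
    (\<lambda>x y m. (fst x + fst y - int m * int l, snd x + snd y - m))
    (\<lambda>x y m. of_nat (snd x choose m) * (\<Prod>t<m. of_int (fst y) / of_nat l - of_nat t))"
  unfolding Wmult_def deformed_mult_def ..

lemma wpt_Lmult:
  fixes P Q :: "int \<times> nat \<Rightarrow> 'a::field_char_0"
  assumes "l > 0" "finite (supp P)" "finite (supp Q)" "P \<noteq> (\<lambda>_. 0)" "Q \<noteq> (\<lambda>_. 0)"
  shows "wpt l (Lmult P Q) = wpt l P + wpt l Q"
proof -
  interpret deformed_product l "\<lambda>_. {0}" "\<lambda>x y m. x + y" "\<lambda>_ _ _. 1 :: 'a"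
    using assms(1) by (rule deformed_product_Lmult)
  show ?thesis
    using wpt_mult[OF assms(2-)] by (simp add: Lmult_eq_deformed_mult)
qed

lemma wbar_Lmult:
  fixes P Q :: "int \<times> nat \<Rightarrow> 'a::field_char_0"
  assumes "l > 0" "finite (supp P)" "finite (supp Q)" "P \<noteq> (\<lambda>_. 0)" "Q \<noteq> (\<lambda>_. 0)"
  shows "wbar l (Lmult P Q) = wbar l P + wbar l Q"
proof -
  interpret deformed_product l "\<lambda>_. {0}" "\<lambda>x y m. x + y" "\<lambda>_ _ _. 1 :: 'a"
    using assms(1) by (rule deformed_product_Lmult)
  show ?thesis
    using wbar_mult[OF assms(2-)] by (simp add: Lmult_eq_deformed_mult)
qed

context deformed_product
begin

lemma st_mult:
  assumes "\<rho> + \<sigma> > 0" "finite (supp P)" "finite (supp Q)" "P \<noteq> (\<lambda>_. 0)" "Q \<noteq> (\<lambda>_. 0)"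
  shows "st l \<rho> \<sigma> (mult P Q) = st l \<rho> \<sigma> P + st l \<rho> \<sigma> Q"
  using assms unfolding st_def lead_mult[OF assms]
  by (intro wpt_Lmult l_pos lead_nonzero finite_subset[OF supp_lead_subset])

lemma en_mult:
  assumes "\<rho> + \<sigma> > 0" "finite (supp P)" "finite (supp Q)" "P \<noteq> (\<lambda>_. 0)" "Q \<noteq> (\<lambda>_. 0)"
  shows "en l \<rho> \<sigma> (mult P Q) = en l \<rho> \<sigma> P + en l \<rho> \<sigma> Q"
  using assms unfolding en_def lead_mult[OF assms]
  by (intro wbar_Lmult l_pos lead_nonzero finite_subset[OF supp_lead_subset])

lemma mult_invariants:
  assumes "finite (supp P)" "finite (supp Q)" "P \<noteq> (\<lambda>_. 0)" "Q \<noteq> (\<lambda>_. 0)"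
  shows "wpt l (mult P Q) = wpt l P + wpt l Q
    \<and> wbar l (mult P Q) = wbar l P + wbar l Q
    \<and> mult P Q \<noteq> (\<lambda>_. 0)
    \<and> (\<forall>(\<rho>, \<sigma>) \<in> V. lead l \<rho> \<sigma> (mult P Q) = Lmult (lead l \<rho> \<sigma> P) (lead l \<rho> \<sigma> Q))
    \<and> (\<forall>(\<rho>, \<sigma>) \<in> Vbar. vval l \<rho> \<sigma> (mult P Q) = vval l \<rho> \<sigma> P + vval l \<rho> \<sigma> Q)
    \<and> (\<forall>(\<rho>, \<sigma>) \<in> V. st l \<rho> \<sigma> (mult P Q) = st l \<rho> \<sigma> P + st l \<rho> \<sigma> Q)
    \<and> (\<forall>(\<rho>, \<sigma>) \<in> V. en l \<rho> \<sigma> (mult P Q) = en l \<rho> \<sigma> P + en l \<rho> \<sigma> Q)"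
  using assms wpt_mult wbar_mult mult_nonzero lead_mult vval_mult st_mult en_mult
  by (auto simp: V_def Vbar_def)

end

lemma deformed_product_Wmult:
  assumes "l > 0"
  shows "deformed_product l (\<lambda>x. {..snd x})
    (\<lambda>x y m. (fst x + fst y - int m * int l, snd x + snd y - m))
    (\<lambda>x y m. of_nat (snd x choose m) * (\<Prod>t<m. of_int (fst y) / of_nat l - (of_nat t :: 'a::field_char_0)))"
proof
  fix x y :: "int \<times> nat" and m :: nat
  assume "m \<in> {..snd x}" "m \<noteq> 0"
  then show "dec l (fst x + fst y - int m * int l, snd x + snd y - m)
      = dec l x + dec l y - (of_nat m, of_nat m)"
    using assms by (simp add: dec_def of_nat_diff field_simps)
qed (use assms in auto)

theorem proposition1p8:
  fixes l :: nat and P Q :: "int \<times> nat \<Rightarrow> 'a::field_char_0"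
  assumes "l > 0"
    and "finite (supp P)" and "finite (supp Q)"
    and "P \<noteq> (\<lambda>_. 0)" and "Q \<noteq> (\<lambda>_. 0)"
  shows "\<forall>mul \<in> {Wmult l, Lmult}.
      wpt l (mul P Q) = wpt l P + wpt l Q
    \<and> wbar l (mul P Q) = wbar l P + wbar l Q
    \<and> mul P Q \<noteq> (\<lambda>_. 0)
    \<and> (\<forall>(\<rho>, \<sigma>) \<in> V. lead l \<rho> \<sigma> (mul P Q) = Lmult (lead l \<rho> \<sigma> P) (lead l \<rho> \<sigma> Q))
    \<and> (\<forall>(\<rho>, \<sigma>) \<in> Vbar. vval l \<rho> \<sigma> (mul P Q) = vval l \<rho> \<sigma> P + vval l \<rho> \<sigma> Q)
    \<and> (\<forall>(\<rho>, \<sigma>) \<in> V. st l \<rho> \<sigma> (mul P Q) = st l \<rho> \<sigma> P + st l \<rho> \<sigma> Q)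
    \<and> (\<forall>(\<rho>, \<sigma>) \<in> V. en l \<rho> \<sigma> (mul P Q) = en l \<rho> \<sigma> P + en l \<rho> \<sigma> Q)"
proof -
  interpret W: deformed_product l "\<lambda>x. {..snd x}"
    "\<lambda>x y m. (fst x + fst y - int m * int l, snd x + snd y - m)"
    "\<lambda>x y m. of_nat (snd x choose m) * (\<Prod>t<m. of_int (fst y) / of_nat l - (of_nat t :: 'a))"
    using assms(1) by (rule deformed_product_Wmult)
  interpret L: deformed_product l "\<lambda>_. {0}" "\<lambda>x y m. x + y" "\<lambda>_ _ _. 1 :: 'a"
    using assms(1) by (rule deformed_product_Lmult)
  have "{Wmult l, Lmult} = {W.mult, L.mult}"
    by (simp only: Wmult_eq_deformed_mult Lmult_eq_deformed_mult)
  then show ?thesis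
    using W.mult_invariants[OF assms(2-5)] L.mult_invariants[OF assms(2-5)] by simp
qed

end
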